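(* Let $P$ be a finite propositional normal logic program, and let $B$ be the operator on subsets of $\mathit{At}(P)$ defined in the context. Then: (1) $B$ is monotone: $F_1\subseteq F_2\subseteq \mathit{At}(P)$ implies $B(F_1)\subseteq B(F_2)$. (2) For every $F\subseteq \mathit{At}(P)$, $A(F)\subseteq B(F)$. (3) For every $F\subseteq F_{wfs}$, $B(F)\subseteq F_{wfs}$. (4) The least fixpoint of $B$ equals $F_{wfs}$. (5) For every $F\subseteq \mathit{At}(P)$, $B(F)=F\cup\big(\overline{F}\setminus LM(P_{F,T}^h)\big)$, where $T=GL(\overline{F})$.
   Context: $P$ is a finite propositional normal logic program (rules $a\leftarrow b_1,\dots,b_m,\mathbf{not}(c_1),\dots,\mathbf{not}(c_n)$). $\mathit{At}(P)$ is the set of atoms occurring in $P$; for $X\subseteq \mathit{At}(P)$, $\overline{X}=\mathit{At}(P)\setminus X$. For a Horn program $Q$, $LM(Q)$ is its least model. For $M\subseteq\mathit{At}(P)$, $P_M$ is obtained from $P$ by removing all rules whose bodies contain a literal $\mathbf{not}(a)$ with $a\in M$; $P^h$ is obtained from $P$ by deleting all negative literals from all rule bodies; $P_M^h=(P_M)^h$. The Gelfond–Lifschitz operator is $GL(M)=LM(P_M^h)$; it is antimonotone. $T_{wfs}=\mathrm{lfp}(GL\circ GL)$ and $F_{wfs}=\overline{GL(T_{wfs})}$ (the atoms true, resp. false, in the well-founded semantics). $A(M)=\overline{GL(GL(\overline{M}))}$. For $F,T\subseteq \mathit{At}(P)$, $P_{F,T}$ is obtained from $P$ by removing (i) all rules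 whose head is in $F$, (ii) all rules whose body contains a positive occurrence of an atom of $F$, (iii) all rules whose body contains $\mathbf{not}(a)$ with $a\in T$; $P_{F,T}^h=(P_{F,T})^h$. The operator $B$ is $B(F)=\overline{LM(P_{F,T}^h)}$ where $T=GL(\overline{F})$. *)

theory Defs
  imports Main
begin

text \<open>A normal rule  a <- b1,...,bm, not c1,...,not cn  is represented as
  (head, positive body atoms, negated body atoms).  A program is a set of rules.\<close>

type_synonym 'a rule = "'a \<times> 'a set \<times> 'a set"
type_synonym 'a program = "'a rule set"

definition head :: "'a rule \<Rightarrow> 'a" where "head r = fst r"
definition pos :: "'a rule \<Rightarrow> 'a set" where "pos r = fst (snd r)"
definition neg :: "'a rule \<Rightarrow> 'a set" where "neg r = snd (snd r)"

definition finite_program :: "'a program \<Rightarrow> bool" where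
  "finite_program P \<longleftrightarrow> finite P \<and> (\<forall>r\<in>P. finite (pos r) \<and> finite (neg r))"

definition At :: "'a program \<Rightarrow> 'a set" where
  "At P = (\<Union>r\<in>P. {head r} \<union> pos r \<union> neg r)"

definition compl :: "'a program \<Rightarrow> 'a set \<Rightarrow> 'a set" where
  "compl P X = At P - X"

definition horn :: "'a program \<Rightarrow> bool" where
  "horn Q \<longleftrightarrow> (\<forall>r\<in>Q. neg r = {})"

definition is_model :: "'a program \<Rightarrow> 'a set \<Rightarrow> bool" where
  "is_model Q X \<longleftrightarrow> (\<forall>r\<in>Q. pos r \<subseteq> X \<longrightarrow> head r \<in> X)"

definition LM :: "'a program \<Rightarrow> 'a set" where
  "LM Q = \<Inter>{X. is_model Q X}"

definition reductM :: "'a program \<Rightarrow> 'a set \<Rightarrow> 'a program" where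
  "reductM P M = {r\<in>P. neg r \<inter> M = {}}"

definition hornify :: "'a program \<Rightarrow> 'a program" where
  "hornify P = (\<lambda>r. (head r, pos r, {})) ` P"

definition GL :: "'a program \<Rightarrow> 'a set \<Rightarrow> 'a set" where
  "GL P M = LM (hornify (reductM P M))"

definition T_wfs :: "'a program \<Rightarrow> 'a set" where
  "T_wfs P = lfp (GL P \<circ> GL P)"

definition F_wfs :: "'a program \<Rightarrow> 'a set" where
  "F_wfs P = compl P (GL P (T_wfs P))"

definition A_op :: "'a program \<Rightarrow> 'a set \<Rightarrow> 'a set" where
  "A_op P M = compl P (GL P (GL P (compl P M)))"

definition reductFT :: "'a program \<Rightarrow> 'a set \<Rightarrow> 'a set \<Rightarrow> 'a program" where
  "reductFT P F T = {r\<in>P. head r \<notin> F \<and> pos r \<inter> F = {} \<and> neg r \<inter> T = {}}"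

definition B_op :: "'a program \<Rightarrow> 'a set \<Rightarrow> 'a set" where
  "B_op P F = compl P (LM (hornify (reductFT P F (GL P (compl P F)))))"

end

theory Submission
  imports Defs
begin

text \<open>
  Since \<open>P\<^sub>F\<^sub>,\<^sub>T \<subseteq> P\<^sub>T\<close>, the least model of \<open>P\<^sub>F\<^sub>,\<^sub>T\<^sup>h\<close> lies in \<open>GL(T)\<close>, which gives \<open>A(F) \<subseteq> B(F)\<close>.
  The complement of \<open>F\<^sub>w\<^sub>f\<^sub>s\<close> is \<open>GL(T\<^sub>w\<^sub>f\<^sub>s)\<close>; as it is disjoint from \<open>F\<^sub>w\<^sub>f\<^sub>s\<close>, deleting
  the rules that mention \<open>F\<^sub>w\<^sub>f\<^sub>s\<close> positively or in the head does not change the least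
  model, so \<open>F\<^sub>w\<^sub>f\<^sub>s\<close> is a fixpoint of the monotone operator \<open>B\<close>. Conversely, if
  \<open>B(G) \<subseteq> G\<close> and \<open>T = GL(\<overline>G)\<close>, then \<open>\<overline>G \<subseteq> GL(T)\<close>, hence \<open>GL(GL(T)) \<subseteq> T\<close>,
  so \<open>T\<^sub>w\<^sub>f\<^sub>s \<subseteq> T\<close> and \<open>F\<^sub>w\<^sub>f\<^sub>s \<subseteq> G\<close>.
\<close>

lemma is_model_hornify_iff:
  "is_model (hornify Q) X \<longleftrightarrow> (\<forall>r\<in>Q. pos r \<subseteq> X \<longrightarrow> head r \<in> X)"
  by (auto simp: is_model_def hornify_def head_def pos_def)

lemma LM_lowerbound: "is_model Q X \<Longrightarrow> LM Q \<subseteq> X"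
  unfolding LM_def by blast

lemma is_model_LM: "is_model Q (LM Q)"
  unfolding is_model_def LM_def by blast

lemma LM_hornify_closed: "r \<in> Q \<Longrightarrow> pos r \<subseteq> LM (hornify Q) \<Longrightarrow> head r \<in> LM (hornify Q)"
  using is_model_LM[of "hornify Q"] by (auto simp: is_model_hornify_iff)

lemma LM_hornify_subset_heads: "LM (hornify Q) \<subseteq> head ` Q"
  by (rule LM_lowerbound) (auto simp: is_model_hornify_iff)

lemma LM_hornify_mono: "Q \<subseteq> Q' \<Longrightarrow> LM (hornify Q) \<subseteq> LM (hornify Q')"
  unfolding LM_def is_model_hornify_iff by blast

lemma GL_antimono: "M \<subseteq> M' \<Longrightarrow> GL P M' \<subseteq> GL P M"
  unfolding GL_def by (rule LM_hornify_mono) (auto simp: reductM_def)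

lemma GL_subset_At: "GL P M \<subseteq> At P"
  using LM_hornify_subset_heads[of "reductM P M"]
  by (auto simp: GL_def reductM_def At_def)

lemma LM_reductFT_subset: "LM (hornify (reductFT P F T)) \<subseteq> At P - F"
  using LM_hornify_subset_heads[of "reductFT P F T"] by (auto simp: reductFT_def At_def)

lemma LM_reductFT_subset_GL: "LM (hornify (reductFT P F T)) \<subseteq> GL P T"
  unfolding GL_def by (rule LM_hornify_mono) (auto simp: reductFT_def reductM_def)

lemma LM_reductFT_eq_GL:
  assumes disjoint: "F \<inter> GL P T = {}"
  shows "LM (hornify (reductFT P F T)) = GL P T"
proof
  let ?M = "LM (hornify (reductFT P F T))"
  have "is_model (hornify (reductM P T)) ?M"
    unfolding is_model_hornify_iff
  proof (intro ballI impI)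
    fix r assume r: "r \<in> reductM P T" and body: "pos r \<subseteq> ?M"
    have "pos r \<subseteq> GL P T"
      using body LM_reductFT_subset_GL[of P F T] by (rule order_trans)
    with r have "head r \<in> GL P T"
      unfolding GL_def by (rule LM_hornify_closed)
    moreover have "pos r \<inter> F = {}"
      using body LM_reductFT_subset[of P F T] by blast
    ultimately have "r \<in> reductFT P F T"
      using r disjoint by (auto simp: reductFT_def reductM_def)
    then show "head r \<in> ?M" using body by (rule LM_hornify_closed)
  qed
  then show "GL P T \<subseteq> ?M" unfolding GL_def by (rule LM_lowerbound)
qed (rule LM_reductFT_subset_GL)

lemma mono_GL_GL: "mono (GL P \<circ> GL P)"
  by (rule monoI) (simp add: GL_antimono)

lemma GL_GL_T_wfs: "GL P (GL P (T_wfs P)) = T_wfs P"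
  using lfp_unfold[OF mono_GL_GL[of P]] unfolding T_wfs_def by simp

lemma F_wfs_subset_At: "F_wfs P \<subseteq> At P"
  by (auto simp: F_wfs_def compl_def)

lemma compl_F_wfs: "compl P (F_wfs P) = GL P (T_wfs P)"
  using GL_subset_At[of P "T_wfs P"] by (auto simp: compl_def F_wfs_def)

lemma B_op_eq:
  assumes "F \<subseteq> At P"
  shows "B_op P F = F \<union> (compl P F - LM (hornify (reductFT P F (GL P (compl P F)))))"
  using assms LM_reductFT_subset[of P F "GL P (compl P F)"] unfolding B_op_def compl_def by blast

lemma B_op_mono:
  assumes "F1 \<subseteq> F2"
  shows "B_op P F1 \<subseteq> B_op P F2"
proof -
  have "GL P (compl P F1) \<subseteq> GL P (compl P F2)"
    by (rule GL_antimono) (use assms in \<open>auto simp: compl_def\<close>)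
  then have "reductFT P F2 (GL P (compl P F2)) \<subseteq> reductFT P F1 (GL P (compl P F1))"
    using assms by (auto simp: reductFT_def)
  then show ?thesis unfolding B_op_def compl_def using LM_hornify_mono by blast
qed

lemma A_op_subset_B_op: "A_op P F \<subseteq> B_op P F"
  using LM_reductFT_subset_GL[of P F "GL P (compl P F)"]
  unfolding A_op_def B_op_def compl_def by blast

lemma B_op_F_wfs: "B_op P (F_wfs P) = F_wfs P"
proof -
  have "GL P (compl P (F_wfs P)) = T_wfs P"
    by (simp add: compl_F_wfs GL_GL_T_wfs)
  moreover have "F_wfs P \<inter> GL P (T_wfs P) = {}"
    by (auto simp: F_wfs_def compl_def)
  ultimately show ?thesis
    by (simp add: B_op_def LM_reductFT_eq_GL F_wfs_def)
qed

lemma B_op_subset_F_wfs: "F \<subseteq> F_wfs P \<Longrightarrow> B_op P F \<subseteq> F_wfs P"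
  using B_op_mono[of F "F_wfs P" P] B_op_F_wfs[of P] by blast

lemma F_wfs_subset_if_B_op_subset:
  assumes "G \<subseteq> At P" and prefix: "B_op P G \<subseteq> G"
  shows "F_wfs P \<subseteq> G"
proof -
  define T where "T = GL P (compl P G)"
  have compl_G: "compl P G \<subseteq> GL P T"
    using prefix LM_reductFT_subset_GL[of P G T] unfolding B_op_def T_def compl_def by blast
  then have "(GL P \<circ> GL P) T \<subseteq> T"
    unfolding T_def by (simp add: GL_antimono)
  then have "T_wfs P \<subseteq> T"
    unfolding T_wfs_def by (rule lfp_lowerbound)
  then have "compl P G \<subseteq> GL P (T_wfs P)"
    using compl_G GL_antimono by blast
  then show ?thesis
    using assms(1) by (auto simp: F_wfs_def compl_def)
qed

theorem theorem1:
  fixes P :: "'a program"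
  assumes "finite_program P"
  shows "(\<forall>F1 F2. F1 \<subseteq> F2 \<and> F2 \<subseteq> At P \<longrightarrow> B_op P F1 \<subseteq> B_op P F2)
    \<and> (\<forall>F. F \<subseteq> At P \<longrightarrow> A_op P F \<subseteq> B_op P F)
    \<and> (\<forall>F. F \<subseteq> F_wfs P \<longrightarrow> B_op P F \<subseteq> F_wfs P)
    \<and> (F_wfs P \<subseteq> At P \<and> B_op P (F_wfs P) = F_wfs P
       \<and> (\<forall>G. G \<subseteq> At P \<and> B_op P G = G \<longrightarrow> F_wfs P \<subseteq> G))
    \<and> (\<forall>F. F \<subseteq> At P \<longrightarrow>
         B_op P F = F \<union> (compl P F - LM (hornify (reductFT P F (GL P (compl P F))))))"
proof (intro conjI allI impI)
  fix F1 F2 :: "'a set" assume "F1 \<subseteq> F2 \<and> F2 \<subseteq> At P"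
  then show "B_op P F1 \<subseteq> B_op P F2" using B_op_mono by blast
next
  fix F :: "'a set"
  show "A_op P F \<subseteq> B_op P F" by (rule A_op_subset_B_op)
  assume "F \<subseteq> F_wfs P"
  then show "B_op P F \<subseteq> F_wfs P" by (rule B_op_subset_F_wfs)
next
  show "F_wfs P \<subseteq> At P" by (rule F_wfs_subset_At)
  show "B_op P (F_wfs P) = F_wfs P" by (rule B_op_F_wfs)
next
  fix G :: "'a set" assume "G \<subseteq> At P \<and> B_op P G = G"
  then show "F_wfs P \<subseteq> G" by (simp add: F_wfs_subset_if_B_op_subset)
next
  fix F :: "'a set" assume "F \<subseteq> At P"
  then show "B_op P F = F \<union> (compl P F - LM (hornify (reductFT P F (GL P (compl P F)))))"
    by (rule B_op_eq)
qed

end
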